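(* Let $\mathcal S$ be a Garside family in a left-cancellative category $\mathcal C$, and let $\mathcal S'$ be a subfamily of $\mathcal S^\sharp$ such that $\mathcal S'(\mathcal S'\cap\mathcal C^\times)\subseteq\mathcal S'$ and every element of $\mathcal S'^{\,2}$ admits an $\mathcal S$-normal decomposition all of whose entries lie in $\mathcal S'$. Then every element of the subcategory of $\mathcal C$ generated by $\mathcal S'$ admits an $\mathcal S$-normal decomposition all of whose entries lie in $\mathcal S'$.
   Context: A category is left-cancellative if $fg=fg'\Rightarrow g=g'$. $\mathcal C^\times$ is the family of invertible elements; $\mathcal S^\sharp=\mathcal S\mathcal C^\times\cup\mathcal C^\times$; $\mathcal S'^{\,2}$ is the family of products $s_1s_2$ with $s_1,s_2\in\mathcal S'$, and $\mathcal S'(\mathcal S'\cap\mathcal C^\times)$ the family of products $s\epsilon$ with $s\in\mathcal S'$, $\epsilon\in\mathcal S'\cap\mathcal C^\times$. $f\preccurlyeq g$ means $g=fg'$ for some $g'$. A length-two path $(g_1,g_2)$ is $\mathcal S$-greedy if for all $s\in\mathcal S$ and $f\in\mathcal C$ with $fg_1$ defined, $s\preccurlyeq fg_1g_2$ implies $s\preccurlyeq fg_1$; a path is $\mathcal S$-greedy if all its length-two subpaths are. A path is $\mathcal S$-normal if it is $\mathcal S$-greedy with all entries in $\mathcal S^\sharp$. An $\mathcal S$-normal decomposition of $g$ is an $\mathcal S$-normal path whose product is $g$. $\mathcal S$ is a Garside family in $\mathcal C$ if every element of $\mathcal C$ admits an $\mathcal S$-normal decomposition. *)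

theory Defs
  imports Main
begin

text \<open>Following the Garside
convention, the product f g (written cmp f g) is defined iff tgt f = src g.\<close>

record ('o, 'm) cat =
  Ob  :: "'o set"
  Mor :: "'m set"
  src :: "'m \<Rightarrow> 'o"
  tgt :: "'m \<Rightarrow> 'o"
  idm :: "'o \<Rightarrow> 'm"
  cmp :: "'m \<Rightarrow> 'm \<Rightarrow> 'm"

definition defined :: "('o, 'm) cat \<Rightarrow> 'm \<Rightarrow> 'm \<Rightarrow> bool" where
  "defined C f g \<longleftrightarrow> f \<in> Mor C \<and> g \<in> Mor C \<and> tgt C f = src C g"

definition category :: "('o, 'm) cat \<Rightarrow> bool" where
  "category C \<longleftrightarrow>
     (\<forall>f\<in>Mor C. src C f \<in> Ob C \<and> tgt C f \<in> Ob C) \<and>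
     (\<forall>x\<in>Ob C. idm C x \<in> Mor C \<and> src C (idm C x) = x \<and> tgt C (idm C x) = x) \<and>
     (\<forall>f g. defined C f g \<longrightarrow> cmp C f g \<in> Mor C \<and>
            src C (cmp C f g) = src C f \<and> tgt C (cmp C f g) = tgt C g) \<and>
     (\<forall>f g h. defined C f g \<and> defined C g h \<longrightarrow>
            cmp C (cmp C f g) h = cmp C f (cmp C g h)) \<and>
     (\<forall>f\<in>Mor C. cmp C (idm C (src C f)) f = f \<and> cmp C f (idm C (tgt C f)) = f)"

definition left_cancellative :: "('o, 'm) cat \<Rightarrow> bool" where
  "left_cancellative C \<longleftrightarrow>
     (\<forall>f g g'. defined C f g \<and> defined C f g' \<and> cmp C f g = cmp C f g' \<longrightarrow> g = g')"

definition invertibles :: "('o, 'm) cat \<Rightarrow> 'm set" where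
  "invertibles C = {f \<in> Mor C. \<exists>g. defined C f g \<and> defined C g f \<and>
       cmp C f g = idm C (src C f) \<and> cmp C g f = idm C (tgt C f)}"

definition sharp :: "('o, 'm) cat \<Rightarrow> 'm set \<Rightarrow> 'm set" where
  "sharp C S = {cmp C s e | s e. s \<in> S \<and> e \<in> invertibles C \<and> defined C s e}
               \<union> invertibles C"

definition left_div :: "('o, 'm) cat \<Rightarrow> 'm \<Rightarrow> 'm \<Rightarrow> bool" where
  "left_div C f g \<longleftrightarrow> g \<in> Mor C \<and> (\<exists>g'. defined C f g' \<and> g = cmp C f g')"

definition greedy2 :: "('o, 'm) cat \<Rightarrow> 'm set \<Rightarrow> 'm \<Rightarrow> 'm \<Rightarrow> bool" where
  "greedy2 C S g1 g2 \<longleftrightarrow>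
     (\<forall>s\<in>S. \<forall>f. defined C f g1 \<longrightarrow>
        left_div C s (cmp C (cmp C f g1) g2) \<longrightarrow> left_div C s (cmp C f g1))"

fun is_path :: "('o, 'm) cat \<Rightarrow> 'o \<Rightarrow> 'm list \<Rightarrow> bool" where
  "is_path C x [] \<longleftrightarrow> x \<in> Ob C"
| "is_path C x (g # gs) \<longleftrightarrow> g \<in> Mor C \<and> src C g = x \<and> is_path C (tgt C g) gs"

fun path_prod :: "('o, 'm) cat \<Rightarrow> 'o \<Rightarrow> 'm list \<Rightarrow> 'm" where
  "path_prod C x [] = idm C x"
| "path_prod C x (g # gs) = cmp C g (path_prod C (tgt C g) gs)"

definition greedy_path :: "('o, 'm) cat \<Rightarrow> 'm set \<Rightarrow> 'm list \<Rightarrow> bool" where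
  "greedy_path C S gs \<longleftrightarrow> (\<forall>i. Suc i < length gs \<longrightarrow> greedy2 C S (gs ! i) (gs ! Suc i))"

definition normal_path :: "('o, 'm) cat \<Rightarrow> 'm set \<Rightarrow> 'o \<Rightarrow> 'm list \<Rightarrow> bool" where
  "normal_path C S x gs \<longleftrightarrow> is_path C x gs \<and> greedy_path C S gs \<and> set gs \<subseteq> sharp C S"

definition normal_decomp :: "('o, 'm) cat \<Rightarrow> 'm set \<Rightarrow> 'm \<Rightarrow> 'm list \<Rightarrow> bool" where
  "normal_decomp C S g gs \<longleftrightarrow>
     g \<in> Mor C \<and> normal_path C S (src C g) gs \<and> path_prod C (src C g) gs = g"

definition garside_family :: "('o, 'm) cat \<Rightarrow> 'm set \<Rightarrow> bool" where
  "garside_family C S \<longleftrightarrow> S \<subseteq> Mor C \<and> (\<forall>g\<in>Mor C. \<exists>gs. normal_decomp C S g gs)"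

definition generated_subcat :: "('o, 'm) cat \<Rightarrow> 'm set \<Rightarrow> 'm set" where
  "generated_subcat C S' = {path_prod C x gs | x gs. is_path C x gs \<and> set gs \<subseteq> S'}"

end

theory Submission
  imports Defs
begin

text \<open>Left multiplication by an element \<open>s\<close> of \<open>S'\<close> preserves \<open>S\<close>-greedy paths with entries in
  \<open>S'\<close>: rewrite \<open>s h\<close>, for the first entry \<open>h\<close>, as a greedy path \<open>u t\<close> in \<open>S'\<close> and push \<open>t\<close> into
  the rest of the path by induction; greediness of the result follows from the composition
  rules for greedy pairs. This needs the decompositions of elements of \<open>S'\<^sup>2\<close> to have length at
  most two, which holds because \<open>S\<close>-greedy paths are \<open>S\<^sup>\<sharp>\<close>-greedy: in a greedy decomposition of a
  product of two elements of \<open>S\<^sup>\<sharp>\<close> all entries after the second are invertible, and they can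
  be absorbed into the second entry since \<open>S'(S' \<inter> \<C>\<^sup>\<times>) \<subseteq> S'\<close>.\<close>

lemma greedy_path_Cons_Cons:
  "greedy_path C S (a # b # gs) \<longleftrightarrow> greedy2 C S a b \<and> greedy_path C S (b # gs)"
  unfolding greedy_path_def by (auto simp: All_less_Suc2 less_Suc_eq_0_disj)

lemma greedy_path_Nil [simp]: "greedy_path C S []"
  and greedy_path_single [simp]: "greedy_path C S [a]"
  by (simp_all add: greedy_path_def)

lemma greedy_path_ConsD: "greedy_path C S (a # gs) \<Longrightarrow> greedy_path C S gs"
  by (cases gs) (simp_all add: greedy_path_Cons_Cons)

locale left_cancellative_category =
  fixes C :: "('o, 'm) cat"
  assumes category: "category C" and left_cancellative: "left_cancellative C"
begin

lemma src_Mor [simp]: "f \<in> Mor C \<Longrightarrow> src C f \<in> Ob C"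
  and tgt_Mor [simp]: "f \<in> Mor C \<Longrightarrow> tgt C f \<in> Ob C"
  and idm_Mor [simp]: "x \<in> Ob C \<Longrightarrow> idm C x \<in> Mor C"
  and src_idm [simp]: "x \<in> Ob C \<Longrightarrow> src C (idm C x) = x"
  and tgt_idm [simp]: "x \<in> Ob C \<Longrightarrow> tgt C (idm C x) = x"
  and idm_comp [simp]: "f \<in> Mor C \<Longrightarrow> src C f = x \<Longrightarrow> cmp C (idm C x) f = f"
  and comp_idm [simp]: "f \<in> Mor C \<Longrightarrow> tgt C f = x \<Longrightarrow> cmp C f (idm C x) = f"
  using category unfolding category_def by blast+

context
  fixes f g assumes f: "f \<in> Mor C" and g: "g \<in> Mor C" and fg: "tgt C f = src C g"
begin

lemma comp_Mor [simp]: "cmp C f g \<in> Mor C"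
  and src_comp [simp]: "src C (cmp C f g) = src C f"
  and tgt_comp [simp]: "tgt C (cmp C f g) = tgt C g"
  using category f g fg unfolding category_def defined_def by blast+

end

lemma comp_assoc:
  "\<lbrakk>f \<in> Mor C; g \<in> Mor C; h \<in> Mor C; tgt C f = src C g; tgt C g = src C h\<rbrakk>
   \<Longrightarrow> cmp C (cmp C f g) h = cmp C f (cmp C g h)"
  using category unfolding category_def defined_def by blast

lemma left_cancel:
  "\<lbrakk>f \<in> Mor C; g \<in> Mor C; g' \<in> Mor C; tgt C f = src C g; tgt C f = src C g';
    cmp C f g = cmp C f g'\<rbrakk> \<Longrightarrow> g = g'"
  using left_cancellative unfolding left_cancellative_def defined_def by blast

lemma path_prod_Mor: "is_path C x gs \<Longrightarrow> path_prod C x gs \<in> Mor C"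
  and src_path_prod: "is_path C x gs \<Longrightarrow> src C (path_prod C x gs) = x"
  by (induction gs arbitrary: x) auto

lemma left_div_comp_right:
  assumes "left_div C s f" and "g \<in> Mor C" and "tgt C f = src C g"
  shows "left_div C s (cmp C f g)"
proof -
  obtain f' where f': "f' \<in> Mor C" "s \<in> Mor C" "tgt C s = src C f'" "f = cmp C s f'"
    using assms(1) unfolding left_div_def defined_def by blast
  then have "cmp C f g = cmp C s (cmp C f' g)"
    using assms by (simp add: comp_assoc)
  then show ?thesis
    using f' assms unfolding left_div_def defined_def
    by (intro conjI exI[of _ "cmp C f' g"]) auto
qed

lemma left_div_comp:
  "f \<in> Mor C \<Longrightarrow> g \<in> Mor C \<Longrightarrow> tgt C f = src C g \<Longrightarrow> left_div C f (cmp C f g)"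
  unfolding left_div_def defined_def by auto

lemma left_div_src: "left_div C s f \<Longrightarrow> src C s = src C f"
  unfolding left_div_def defined_def by auto

lemma left_div_comp_leftD:
  assumes div: "left_div C (cmp C s e) f"
    and s: "s \<in> Mor C" and e: "e \<in> Mor C" and se: "tgt C s = src C e"
  shows "left_div C s f"
proof -
  obtain c where c: "c \<in> Mor C" "tgt C e = src C c" "f = cmp C (cmp C s e) c"
    using div s e se unfolding left_div_def defined_def by auto
  then have "f = cmp C s (cmp C e c)"
    using s e se by (simp add: comp_assoc)
  then show ?thesis
    using s e se c div unfolding left_div_def defined_def
    by (intro conjI exI[of _ "cmp C e c"]) simp_all
qed

subsection \<open>Invertible elements\<close>

lemma invertibles_Mor: "e \<in> invertibles C \<Longrightarrow> e \<in> Mor C"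
  by (simp add: invertibles_def)

lemma invertibleE:
  assumes "e \<in> invertibles C"
  obtains e' where "e' \<in> Mor C" "src C e' = tgt C e" "tgt C e' = src C e"
    "cmp C e e' = idm C (src C e)" "cmp C e' e = idm C (tgt C e)"
  using assms unfolding invertibles_def defined_def by auto

text \<open>Left cancellativity makes every right inverse two-sided: \<open>d (q d) = (d q) d = d\<close>.\<close>
lemma right_inverse_invertible:
  assumes d: "d \<in> Mor C" and q: "q \<in> Mor C" and dq: "tgt C d = src C q"
    and inv: "cmp C d q = idm C (src C d)"
  shows "d \<in> invertibles C" and "q \<in> invertibles C"
proof -
  have tq: "tgt C q = src C d"
    using inv d q dq by (metis tgt_comp tgt_idm src_Mor)
  have "cmp C d (cmp C q d) = cmp C (cmp C d q) d"
    using d q dq tq by (simp add: comp_assoc)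
  also have "\<dots> = cmp C d (idm C (tgt C d))"
    using d inv by simp
  finally have "cmp C d (cmp C q d) = cmp C d (idm C (tgt C d))" .
  then have qd: "cmp C q d = idm C (tgt C d)"
    using d q dq tq by (auto intro: left_cancel)
  show "d \<in> invertibles C" "q \<in> invertibles C"
    unfolding invertibles_def defined_def using d q dq tq inv qd by auto
qed

lemma invertible_comp_factors:
  assumes a: "a \<in> Mor C" and b: "b \<in> Mor C" and ab: "tgt C a = src C b"
    and inv: "cmp C a b \<in> invertibles C"
  shows "a \<in> invertibles C" and "b \<in> invertibles C"
proof -
  obtain z where z: "z \<in> Mor C" "src C z = tgt C b" "cmp C (cmp C a b) z = idm C (src C a)"
    using invertibleE[OF inv] a b ab by auto
  then have "cmp C a (cmp C b z) = idm C (src C a)"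
    using a b ab by (simp add: comp_assoc)
  then have a_inv: "a \<in> invertibles C" and bz_inv: "cmp C b z \<in> invertibles C"
    using right_inverse_invertible[of a "cmp C b z"] a b ab z by simp_all
  obtain y where y: "y \<in> Mor C" "src C y = tgt C z" "cmp C (cmp C b z) y = idm C (src C b)"
    using invertibleE[OF bz_inv] b z by auto
  then have "cmp C b (cmp C z y) = idm C (src C b)"
    using b z by (simp add: comp_assoc)
  then show "b \<in> invertibles C"
    using right_inverse_invertible(1)[of b "cmp C z y"] b y z by simp
  show "a \<in> invertibles C" by (fact a_inv)
qed

lemma invertible_path_prod_entries:
  "is_path C x gs \<Longrightarrow> path_prod C x gs \<in> invertibles C \<Longrightarrow> set gs \<subseteq> invertibles C"
proof (induction gs arbitrary: x)
  case (Cons g gs)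
  then have "g \<in> invertibles C \<and> path_prod C (tgt C g) gs \<in> invertibles C"
    using invertible_comp_factors[of g "path_prod C (tgt C g) gs"]
    by (simp add: path_prod_Mor src_path_prod)
  with Cons.IH[of "tgt C g"] Cons.prems show ?case by simp
qed simp

lemma invertible_left_div:
  assumes e: "e \<in> invertibles C" and f: "f \<in> Mor C" and "src C f = src C e"
  shows "left_div C e f"
proof -
  obtain e' where e': "e' \<in> Mor C" "src C e' = tgt C e" "tgt C e' = src C e"
    "cmp C e e' = idm C (src C e)"
    using invertibleE[OF e] by blast
  have "cmp C e (cmp C e' f) = cmp C (cmp C e e') f"
    using invertibles_Mor[OF e] e'(1-3) f assms(3) by (simp add: comp_assoc)
  also have "\<dots> = f"
    using e'(4) f assms(3) by simp
  finally show ?thesis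
    unfolding left_div_def defined_def using invertibles_Mor[OF e] e'(1-3) f assms(3)
    by (intro conjI exI[of _ "cmp C e' f"]) simp_all
qed

lemma left_div_comp_invertible:
  assumes div: "left_div C s f" and e: "e \<in> invertibles C" and se: "tgt C s = src C e"
  shows "left_div C (cmp C s e) f"
proof -
  obtain c where c: "s \<in> Mor C" "c \<in> Mor C" "tgt C s = src C c" "f = cmp C s c" "f \<in> Mor C"
    using div unfolding left_div_def defined_def by blast
  obtain e' where e': "e' \<in> Mor C" "src C e' = tgt C e" "tgt C e' = src C e"
    "cmp C e e' = idm C (src C e)"
    using invertibleE[OF e] by blast
  have "cmp C e (cmp C e' c) = cmp C (cmp C e e') c"
    using invertibles_Mor[OF e] e'(1-3) c se by (simp add: comp_assoc)
  also have "\<dots> = c"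
    using e'(4) c se by simp
  finally have "cmp C (cmp C s e) (cmp C e' c) = f"
    using invertibles_Mor[OF e] e'(1-3) c se by (simp add: comp_assoc)
  then show ?thesis
    unfolding left_div_def defined_def using invertibles_Mor[OF e] e'(1-3) c se
    by (intro conjI exI[of _ "cmp C e' c"]) simp_all
qed

lemma sharp_Mor: "sharp C S \<subseteq> Mor C"
  unfolding sharp_def defined_def by (auto simp: invertibles_Mor)

subsection \<open>Greedy paths\<close>

lemma greedy2_comp_left:
  assumes gr: "greedy2 C S g h" and s: "s \<in> Mor C" and g: "g \<in> Mor C"
    and sg: "tgt C s = src C g"
  shows "greedy2 C S (cmp C s g) h"
  unfolding greedy2_def
proof (intro ballI allI impI)
  fix r f assume r: "r \<in> S" and f: "defined C f (cmp C s g)"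
    and div: "left_div C r (cmp C (cmp C f (cmp C s g)) h)"
  have fsg: "cmp C f (cmp C s g) = cmp C (cmp C f s) g"
    using f s g sg by (simp add: defined_def comp_assoc)
  have "defined C (cmp C f s) g"
    using f s g sg by (simp add: defined_def)
  then show "left_div C r (cmp C f (cmp C s g))"
    using gr r div unfolding fsg greedy2_def by blast
qed

lemma greedy2_comp_right_factor:
  assumes gr: "greedy2 C S g (cmp C h k)" and h: "h \<in> Mor C" and k: "k \<in> Mor C"
    and hk: "tgt C h = src C k" and gh: "tgt C g = src C h"
  shows "greedy2 C S g h"
  unfolding greedy2_def
proof (intro ballI allI impI)
  fix r f assume r: "r \<in> S" and f: "defined C f g"
    and div: "left_div C r (cmp C (cmp C f g) h)"
  have fg: "cmp C f g \<in> Mor C" "tgt C (cmp C f g) = tgt C g"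
    using f by (simp_all add: defined_def)
  have "left_div C r (cmp C (cmp C (cmp C f g) h) k)"
    using left_div_comp_right[OF div k] fg h hk gh by simp
  then have "left_div C r (cmp C (cmp C f g) (cmp C h k))"
    using fg h k hk gh by (simp add: comp_assoc)
  then show "left_div C r (cmp C f g)"
    using gr r f unfolding greedy2_def by blast
qed

lemma greedy2_comp_extend:
  assumes gr1: "greedy2 C S g h" and gr2: "greedy2 C S (cmp C g h) k"
    and g: "g \<in> Mor C" and h: "h \<in> Mor C" and k: "k \<in> Mor C"
    and gh: "tgt C g = src C h" and hk: "tgt C h = src C k"
  shows "greedy2 C S g (cmp C h k)"
  unfolding greedy2_def
proof (intro ballI allI impI)
  fix r f assume r: "r \<in> S" and f: "defined C f g"
    and div: "left_div C r (cmp C (cmp C f g) (cmp C h k))"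
  have f': "f \<in> Mor C" "tgt C f = src C g"
    using f by (simp_all add: defined_def)
  have fgh: "cmp C (cmp C f g) h = cmp C f (cmp C g h)"
    using f' g h gh by (simp add: comp_assoc)
  have "cmp C (cmp C f g) (cmp C h k) = cmp C (cmp C (cmp C f g) h) k"
    using f' g h k gh hk by (simp add: comp_assoc)
  also have "\<dots> = cmp C (cmp C f (cmp C g h)) k"
    by (simp only: fgh)
  finally have "cmp C (cmp C f g) (cmp C h k) = cmp C (cmp C f (cmp C g h)) k" .
  moreover have "defined C f (cmp C g h)"
    using f' g h gh by (simp add: defined_def)
  ultimately have "left_div C r (cmp C (cmp C f g) h)"
    using gr2 r div unfolding fgh greedy2_def by auto
  then show "left_div C r (cmp C f g)"
    using gr1 r f unfolding greedy2_def by blast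
qed

lemma greedy2_idm: "g \<in> Mor C \<Longrightarrow> greedy2 C S g (idm C (tgt C g))"
  unfolding greedy2_def defined_def by simp

lemma greedy2_path_prod:
  "is_path C x (g # gs) \<Longrightarrow> greedy_path C S (g # gs) \<Longrightarrow> greedy2 C S g (path_prod C (tgt C g) gs)"
proof (induction gs arbitrary: g x)
  case Nil
  then show ?case by (simp add: greedy2_idm)
next
  case (Cons h hs)
  then have g: "g \<in> Mor C" and h: "h \<in> Mor C" and gh: "tgt C g = src C h"
    and hs: "is_path C (tgt C h) hs"
    by auto
  have "greedy2 C S h (path_prod C (tgt C h) hs)"
    using Cons by (auto simp: greedy_path_Cons_Cons)
  then have "greedy2 C S (cmp C g h) (path_prod C (tgt C h) hs)"
    using greedy2_comp_left g h gh by blast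
  moreover have "greedy2 C S g h"
    using Cons.prems by (simp add: greedy_path_Cons_Cons)
  ultimately show ?case
    using greedy2_comp_extend[OF _ _ g h path_prod_Mor[OF hs] gh] src_path_prod[OF hs] by simp
qed

lemma greedy_path_Cons_iff:
  assumes "is_path C x (g # gs)" and "greedy_path C S gs"
  shows "greedy_path C S (g # gs) \<longleftrightarrow> greedy2 C S g (path_prod C (tgt C g) gs)"
proof
  assume "greedy_path C S (g # gs)"
  with assms(1) show "greedy2 C S g (path_prod C (tgt C g) gs)"
    by (rule greedy2_path_prod)
next
  assume gr: "greedy2 C S g (path_prod C (tgt C g) gs)"
  show "greedy_path C S (g # gs)"
  proof (cases gs)
    case (Cons h hs)
    with assms(1) have h: "h \<in> Mor C" "tgt C g = src C h" and hs: "is_path C (tgt C h) hs"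
      by auto
    have "greedy2 C S g h"
      using greedy2_comp_right_factor[OF _ h(1) path_prod_Mor[OF hs]] gr Cons h
        src_path_prod[OF hs] by simp
    with assms(2) Cons show ?thesis
      by (simp add: greedy_path_Cons_Cons)
  qed simp
qed

lemma greedy_path_short_append:
  assumes "length ds \<le> 1" and ds: "is_path C x ds"
    and hs: "is_path C (tgt C (path_prod C x ds)) hs" and "greedy_path C S hs"
    and gr: "greedy2 C S (path_prod C x ds) (path_prod C (tgt C (path_prod C x ds)) hs)"
  shows "is_path C x (ds @ hs) \<and> greedy_path C S (ds @ hs) \<and>
    path_prod C x (ds @ hs) = cmp C (path_prod C x ds) (path_prod C (tgt C (path_prod C x ds)) hs)"
proof (cases ds)
  case Nil
  with assms show ?thesis
    by (simp add: path_prod_Mor src_path_prod)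
next
  case (Cons u us)
  with assms(1) have "ds = [u]"
    by simp
  with assms show ?thesis
    by (simp add: greedy_path_Cons_iff[of x u hs])
qed

lemma greedy_path_Cons_comp:
  assumes vs: "is_path C (tgt C u) vs" "greedy_path C S vs" "path_prod C (tgt C u) vs = cmp C t p"
    and gr: "greedy2 C S u t" "greedy2 C S (cmp C u t) p"
    and u: "u \<in> Mor C" and t: "t \<in> Mor C" and p: "p \<in> Mor C"
    and ut: "tgt C u = src C t" and tp: "tgt C t = src C p"
  shows "greedy_path C S (u # vs)"
proof -
  have "greedy2 C S u (cmp C t p)"
    using greedy2_comp_extend[OF gr u t p ut tp] .
  with vs u show ?thesis
    using greedy_path_Cons_iff[of "src C u" u vs] by simp
qed

text \<open>An \<open>S\<close>-greedy path is also \<open>S\<^sup>\<sharp>\<close>-greedy: an invertible element left-divides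
  everything with its source, and \<open>s \<epsilon>\<close> left-divides whatever \<open>s\<close> does.\<close>
lemma greedy2_sharp:
  assumes gr: "greedy2 C S g h" and gh: "defined C g h"
  shows "greedy2 C (sharp C S) g h"
  unfolding greedy2_def
proof (intro ballI allI impI)
  fix x f assume x: "x \<in> sharp C S" and f: "defined C f g"
    and div: "left_div C x (cmp C (cmp C f g) h)"
  have fg: "cmp C f g \<in> Mor C" "tgt C (cmp C f g) = src C h" "h \<in> Mor C"
    using f gh by (simp_all add: defined_def)
  from x consider (comp) s e where "s \<in> S" "e \<in> invertibles C" "defined C s e" "x = cmp C s e"
    | (invertible) "x \<in> invertibles C"
    unfolding sharp_def by blast
  then show "left_div C x (cmp C f g)"
  proof cases
    case comp
    then have "left_div C s (cmp C (cmp C f g) h)"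
      using div left_div_comp_leftD invertibles_Mor by (auto simp: defined_def)
    then have "left_div C s (cmp C f g)"
      using gr comp(1) f unfolding greedy2_def by blast
    with comp show ?thesis
      using left_div_comp_invertible by (simp add: defined_def)
  next
    case invertible
    have "src C x = src C (cmp C f g)"
      using left_div_src[OF div] fg by simp
    with invertible fg show ?thesis
      by (simp add: invertible_left_div)
  qed
qed

lemma greedy2_left_div:
  assumes gr: "greedy2 C T g h" and gh: "defined C g h" and s: "s \<in> T"
    and div: "left_div C s (cmp C g h)"
  shows "left_div C s g"
proof -
  have g: "g \<in> Mor C" and "defined C (idm C (src C g)) g"
    using gh by (simp_all add: defined_def)
  moreover have "left_div C s (cmp C (cmp C (idm C (src C g)) g) h)"
    using div g by simp
  ultimately have "left_div C s (cmp C (idm C (src C g)) g)"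
    using gr s unfolding greedy2_def by blast
  with g show ?thesis
    by simp
qed

text \<open>\<open>x\<^sub>1 \<preccurlyeq> g\<^sub>1\<close> gives \<open>x\<^sub>2 = c g\<^sub>2 r\<close>, and then \<open>x\<^sub>2 \<preccurlyeq> c g\<^sub>2\<close> forces \<open>d r = 1\<close>, so \<open>r\<close> is invertible.\<close>
lemma sharp_comp_greedy_tail_invertible:
  assumes x1: "x1 \<in> sharp C S" and x2: "x2 \<in> sharp C S" and x12: "tgt C x1 = src C x2"
    and g1: "g1 \<in> Mor C" and g2: "g2 \<in> Mor C" and r: "r \<in> Mor C"
    and g12: "tgt C g1 = src C g2" and g2r: "tgt C g2 = src C r"
    and gr1: "greedy2 C S g1 (cmp C g2 r)" and gr2: "greedy2 C S g2 r"
    and eq: "cmp C x1 x2 = cmp C g1 (cmp C g2 r)"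
  shows "r \<in> invertibles C"
proof -
  have x1M: "x1 \<in> Mor C" and x2M: "x2 \<in> Mor C"
    using x1 x2 sharp_Mor by blast+
  have "left_div C x1 (cmp C g1 (cmp C g2 r))"
    using left_div_comp[OF x1M x2M x12] eq by simp
  then have "left_div C x1 g1"
    using greedy2_left_div greedy2_sharp[OF gr1] x1 g1 g2 r g12 g2r by (simp add: defined_def)
  then obtain c where c: "c \<in> Mor C" "tgt C x1 = src C c" "g1 = cmp C x1 c"
    unfolding left_div_def defined_def by blast
  have tgt_c: "tgt C c = src C g2"
    using c g1 g12 x1M by simp
  have "cmp C x1 x2 = cmp C x1 (cmp C c (cmp C g2 r))"
    using eq c x1M g2 r g2r tgt_c by (simp add: comp_assoc)
  then have "x2 = cmp C c (cmp C g2 r)"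
    using x1M x2M x12 c g2 r g2r tgt_c by (auto intro: left_cancel)
  then have x2_eq: "x2 = cmp C (cmp C c g2) r"
    using c g2 r g2r tgt_c by (simp add: comp_assoc)
  have "left_div C x2 (cmp C (cmp C c g2) r)"
    using left_div_comp[of x2 "idm C (tgt C x2)"] x2M by (simp flip: x2_eq)
  moreover have "defined C c g2"
    using c g2 tgt_c by (simp add: defined_def)
  ultimately have "left_div C x2 (cmp C c g2)"
    using greedy2_sharp[OF gr2] x2 g2 r g2r unfolding greedy2_def defined_def by blast
  then obtain d where d: "d \<in> Mor C" "tgt C x2 = src C d" "cmp C c g2 = cmp C x2 d"
    unfolding left_div_def defined_def by blast
  have "tgt C d = tgt C (cmp C c g2)"
    using d x2M by simp
  then have tgt_d: "tgt C d = src C r"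
    using c g2 tgt_c g2r by simp
  have "x2 = cmp C x2 (cmp C d r)"
    using x2_eq x2M d r tgt_d by (simp add: comp_assoc)
  then have "cmp C x2 (idm C (tgt C x2)) = cmp C x2 (cmp C d r)"
    using x2M by simp
  then have "cmp C d r = idm C (src C d)"
    using left_cancel[of x2 "idm C (src C d)" "cmp C d r"] x2M d r tgt_d by simp
  then show ?thesis
    using right_inverse_invertible(2) d r tgt_d by blast
qed

end

subsection \<open>Subfamilies with normal squares\<close>

locale square_normal_subfamily = left_cancellative_category +
  fixes S S' :: "'m set"
  assumes S'_sharp: "S' \<subseteq> sharp C S"
    and S'_comp_invertible:
      "\<forall>s\<in>S'. \<forall>e\<in>S' \<inter> invertibles C. defined C s e \<longrightarrow> cmp C s e \<in> S'"
    and S'_square_normal: "\<forall>s1\<in>S'. \<forall>s2\<in>S'. defined C s1 s2 \<longrightarrow>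
           (\<exists>gs. normal_decomp C S (cmp C s1 s2) gs \<and> set gs \<subseteq> S')"
begin

lemma S'_Mor: "S' \<subseteq> Mor C"
  using S'_sharp sharp_Mor by blast

lemma comp_invertible_path_prod_mem:
  "u \<in> S' \<Longrightarrow> is_path C (tgt C u) es \<Longrightarrow> set es \<subseteq> S' \<inter> invertibles C \<Longrightarrow>
    cmp C u (path_prod C (tgt C u) es) \<in> S'"
proof (induction es arbitrary: u)
  case Nil
  then show ?case
    using S'_Mor by auto
next
  case (Cons e es)
  then have u: "u \<in> Mor C" and e: "e \<in> Mor C" "src C e = tgt C u"
    and es: "is_path C (tgt C e) es"
    using S'_Mor by auto
  have "cmp C u e \<in> S'"
    using S'_comp_invertible Cons.prems u e by (auto simp: defined_def)
  then have "cmp C (cmp C u e) (path_prod C (tgt C e) es) \<in> S'"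
    using Cons.IH[of "cmp C u e"] Cons.prems u e es by simp
  then show ?case
    using u e es by (simp add: comp_assoc path_prod_Mor src_path_prod)
qed

lemma square_short_normal_decomp:
  assumes s1: "s1 \<in> S'" and s2: "s2 \<in> S'" and s12: "tgt C s1 = src C s2"
  shows "\<exists>ds. normal_decomp C S (cmp C s1 s2) ds \<and> set ds \<subseteq> S' \<and> length ds \<le> 2"
proof -
  have s1M: "s1 \<in> Mor C" and s2M: "s2 \<in> Mor C"
    using s1 s2 S'_Mor by auto
  obtain ds where ds: "normal_decomp C S (cmp C s1 s2) ds" "set ds \<subseteq> S'"
    using S'_square_normal s1 s2 s1M s2M s12 unfolding defined_def by blast
  show ?thesis
  proof (cases "length ds \<le> 2")
    case False
    then obtain u1 u2 es where ds_eq: "ds = u1 # u2 # es"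
      by (cases ds rule: remdups_adj.cases) auto
    have path: "is_path C (src C s1) ds" and gr: "greedy_path C S ds"
      and prod: "path_prod C (src C s1) ds = cmp C s1 s2"
      using ds(1) s1M s2M s12 unfolding normal_decomp_def normal_path_def by auto
    then have u1: "u1 \<in> Mor C" "src C u1 = src C s1" and u2: "u2 \<in> Mor C" "src C u2 = tgt C u1"
      and es: "is_path C (tgt C u2) es"
      by (auto simp: ds_eq)
    define r where "r = path_prod C (tgt C u2) es"
    have r: "r \<in> Mor C" "src C r = tgt C u2"
      unfolding r_def using es by (simp_all add: path_prod_Mor src_path_prod)
    have gr1: "greedy2 C S u1 (cmp C u2 r)" and gr2: "greedy2 C S u2 r"
      using greedy2_path_prod[OF path[unfolded ds_eq] gr[unfolded ds_eq]]
        greedy2_path_prod[of "tgt C u1" u2 es] path gr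
      by (auto simp: ds_eq r_def greedy_path_Cons_Cons)
    have "r \<in> invertibles C"
      using sharp_comp_greedy_tail_invertible[OF _ _ s12 u1(1) u2(1) r(1) _ _ gr1 gr2]
        s1 s2 S'_sharp u2 r prod by (auto simp: ds_eq r_def)
    then have "set es \<subseteq> S' \<inter> invertibles C"
      using invertible_path_prod_entries[OF es] ds(2) by (auto simp: ds_eq r_def)
    then have U: "cmp C u2 r \<in> S'"
      using comp_invertible_path_prod_mem[of u2 es] ds(2) es by (simp add: ds_eq r_def)
    have "normal_decomp C S (cmp C s1 s2) [u1, cmp C u2 r]"
      unfolding normal_decomp_def normal_path_def
      using s1M s2M s12 u1 u2 r gr1 U S'_sharp prod ds(2)
      by (auto simp: greedy_path_Cons_Cons ds_eq r_def)
    with U ds(2) show ?thesis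
      by (intro exI[of _ "[u1, cmp C u2 r]"]) (simp add: ds_eq)
  qed (use ds in blast)
qed

lemma comp_greedy_path:
  assumes "s \<in> S'" and "is_path C (tgt C s) hs" and "greedy_path C S hs" and "set hs \<subseteq> S'"
  shows "\<exists>ds. is_path C (src C s) ds \<and> greedy_path C S ds \<and> set ds \<subseteq> S' \<and>
           path_prod C (src C s) ds = cmp C s (path_prod C (tgt C s) hs)"
  using assms
proof (induction hs arbitrary: s)
  case Nil
  then show ?case
    using S'_Mor by (intro exI[of _ "[s]"]) auto
next
  case (Cons h hs)
  define p where "p = path_prod C (tgt C h) hs"
  have s: "s \<in> Mor C" and h: "h \<in> Mor C" "src C h = tgt C s" and hs: "is_path C (tgt C h) hs"
    and gr_hs: "greedy_path C S hs"
    using Cons.prems S'_Mor greedy_path_ConsD by auto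
  have p: "p \<in> Mor C" "src C p = tgt C h"
    unfolding p_def using hs by (simp_all add: path_prod_Mor src_path_prod)
  have sh: "cmp C s h \<in> Mor C" "src C (cmp C s h) = src C s" "tgt C (cmp C s h) = tgt C h"
    using s h by simp_all
  have prod_eq: "cmp C s (path_prod C (tgt C s) (h # hs)) = cmp C (cmp C s h) p"
    using s h p by (simp add: p_def comp_assoc)
  have "greedy2 C S h p"
    using greedy_path_Cons_iff Cons.prems(2,3) gr_hs by (simp add: p_def)
  then have gr_shp: "greedy2 C S (cmp C s h) p"
    using greedy2_comp_left s h by simp
  obtain ds where ds: "normal_decomp C S (cmp C s h) ds" "set ds \<subseteq> S'" "length ds \<le> 2"
    using square_short_normal_decomp[of s h] Cons.prems h(2) by auto
  then have ds_path: "is_path C (src C s) ds" and gr_ds: "greedy_path C S ds"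
    and ds_prod: "path_prod C (src C s) ds = cmp C s h"
    using sh unfolding normal_decomp_def normal_path_def by auto
  show ?case
  proof (cases "length ds \<le> 1")
    case True
    have "tgt C (path_prod C (src C s) ds) = tgt C h"
      using ds_prod sh by simp
    with True ds_path ds_prod gr_shp hs gr_hs
    have "is_path C (src C s) (ds @ hs) \<and> greedy_path C S (ds @ hs) \<and>
        path_prod C (src C s) (ds @ hs) = cmp C (cmp C s h) p"
      using greedy_path_short_append[of ds "src C s" hs] by (simp add: p_def)
    with prod_eq ds(2) Cons.prems(4) show ?thesis
      by (intro exI[of _ "ds @ hs"]) simp
  next
    case False
    with ds(3) obtain u t where "ds = [u, t]"
      by (cases ds rule: remdups_adj.cases) auto
    then have u: "u \<in> Mor C" "src C u = src C s" and t: "t \<in> Mor C" "src C t = tgt C u"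
      and ut: "cmp C u t = cmp C s h" and uS: "u \<in> S'" and tS: "t \<in> S'"
      and gr_ut: "greedy2 C S u t"
      using ds_path ds_prod ds(2) gr_ds by (auto simp: greedy_path_Cons_Cons)
    have tgt_t: "tgt C t = tgt C h"
      using u t sh(3) by (simp flip: ut)
    obtain vs where vs: "is_path C (tgt C u) vs" "greedy_path C S vs" "set vs \<subseteq> S'"
      "path_prod C (tgt C u) vs = cmp C t p"
      using Cons.IH[OF tS] hs gr_hs Cons.prems(4) t tgt_t by (auto simp: p_def)
    have "greedy_path C S (u # vs)"
      using greedy_path_Cons_comp[OF vs(1,2,4) gr_ut] gr_shp u t p tgt_t by (simp add: ut)
    moreover have "cmp C u (cmp C t p) = cmp C (cmp C s h) p"
      using u t p tgt_t by (simp flip: ut add: comp_assoc)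
    ultimately show ?thesis
      using prod_eq u vs uS by (intro exI[of _ "u # vs"]) simp
  qed
qed

lemma path_greedy_path:
  "is_path C x gs \<Longrightarrow> set gs \<subseteq> S' \<Longrightarrow>
    \<exists>ds. is_path C x ds \<and> greedy_path C S ds \<and> set ds \<subseteq> S' \<and> path_prod C x ds = path_prod C x gs"
proof (induction gs arbitrary: x)
  case (Cons g gs)
  then have "is_path C (tgt C g) gs" "set gs \<subseteq> S'"
    by simp_all
  then obtain hs where hs: "is_path C (tgt C g) hs" "greedy_path C S hs" "set hs \<subseteq> S'"
    "path_prod C (tgt C g) hs = path_prod C (tgt C g) gs"
    using Cons.IH by blast
  with Cons.prems comp_greedy_path[of g hs] show ?case
    by auto
qed (intro exI[of _ "[]"], simp)

end

theorem mainTheorem12: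
  fixes C :: "('o, 'm) cat" and S S' :: "'m set"
  assumes "category C"
    and "left_cancellative C"
    and "garside_family C S"
    and "S' \<subseteq> sharp C S"
    and "\<forall>s\<in>S'. \<forall>e\<in>S' \<inter> invertibles C. defined C s e \<longrightarrow> cmp C s e \<in> S'"
    and "\<forall>s1\<in>S'. \<forall>s2\<in>S'. defined C s1 s2 \<longrightarrow>
           (\<exists>gs. normal_decomp C S (cmp C s1 s2) gs \<and> set gs \<subseteq> S')"
  shows "\<forall>g\<in>generated_subcat C S'. \<exists>gs. normal_decomp C S g gs \<and> set gs \<subseteq> S'"
proof
  interpret square_normal_subfamily C S S'
    using assms(1,2,4-6) by unfold_locales
  fix g assume "g \<in> generated_subcat C S'"
  then obtain x gs where g: "g = path_prod C x gs" and gs: "is_path C x gs" "set gs \<subseteq> S'"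
    unfolding generated_subcat_def by blast
  then obtain ds where ds: "is_path C x ds" "greedy_path C S ds" "set ds \<subseteq> S'"
    "path_prod C x ds = g"
    using path_greedy_path by blast
  have "g \<in> Mor C" and "src C g = x"
    using g gs path_prod_Mor src_path_prod by blast+
  with ds S'_sharp have "normal_decomp C S g ds"
    unfolding normal_decomp_def normal_path_def by auto
  with ds(3) show "\<exists>gs. normal_decomp C S g gs \<and> set gs \<subseteq> S'"
    by blast
qed

end
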